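(* Let $\alpha\in\mathbb{R}$, $\beta\ge0$, $0<\mu\le1$, and define $g(\lambda)=\frac{(\lambda+\beta)^\mu}{(\lambda+\beta)^\mu+\alpha}$ for $\lambda\in\mathbb{C}$ with $\operatorname{Re}(\lambda)>0$. Then: (a) if $\alpha\ge 0$, then $|g(\lambda)|\le 1$ for all $\operatorname{Re}(\lambda)>0$; (b) if $\alpha<0$ and $\alpha+\beta^\mu\ge|\alpha|$, then $|g(\lambda)|\le\frac{\beta^\mu}{\alpha+\beta^\mu}\le\frac{\beta^\mu}{|\alpha|}$ for all $\operatorname{Re}(\lambda)>0$.
   Context: Complex powers $z^\mu$ are taken with the principal branch of the argument. *)

theory Defs
  imports "HOL-Analysis.Analysis"
begin

text \<open>g(z) = (z+beta)^mu / ((z+beta)^mu + alpha), complex powers via the principal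
  branch (Isabelle's complex powr uses the principal logarithm Ln).\<close>
definition gfun :: "real \<Rightarrow> real \<Rightarrow> real \<Rightarrow> complex \<Rightarrow> complex" where
  "gfun \<alpha> \<beta> \<mu> z =
     (z + of_real \<beta>) powr (of_real \<mu>) / ((z + of_real \<beta>) powr (of_real \<mu>) + of_real \<alpha>)"

end

theory Submission
  imports Defs
begin

text \<open>Write \<open>u = (\<lambda> + \<beta>)\<^sup>\<mu>\<close>, so that \<open>g = u / (u + \<alpha>)\<close>. Since \<open>Re (\<lambda> + \<beta>) > 0\<close> and \<open>\<mu> \<le> 1\<close>,
  the principal power \<open>u\<close> still lies in the closed right half-plane, and \<open>|u| \<ge> \<beta>\<^sup>\<mu>\<close>.
  For \<open>\<alpha> \<ge> 0\<close>, adding \<open>\<alpha>\<close> to a point of the right half-plane does not decrease its modulus.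
  For \<open>\<alpha> < 0\<close>, the reverse triangle inequality gives \<open>|g| \<le> |u| / (|u| + \<alpha>)\<close>, and
  \<open>t \<mapsto> t / (t + \<alpha>)\<close> is decreasing, so its value at \<open>t = |u|\<close> is at most its value at \<open>\<beta>\<^sup>\<mu>\<close>.\<close>

lemma Re_powr_real_nonneg:
  fixes w :: complex and \<mu> :: real
  assumes "Re w > 0" and "\<bar>\<mu>\<bar> \<le> 1"
  shows "Re (w powr of_real \<mu>) \<ge> 0"
proof -
  have arg: "\<bar>Im (Ln w)\<bar> < pi / 2"
    using Re_Ln_pos_lt_imp assms(1) by blast
  have "\<bar>\<mu> * Im (Ln w)\<bar> \<le> \<bar>Im (Ln w)\<bar>"
    using assms(2) by (simp add: abs_mult mult_left_le_one_le)
  with arg have "cos (\<mu> * Im (Ln w)) \<ge> 0"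
    by (intro cos_ge_zero) auto
  moreover have "Re (w powr of_real \<mu>) = exp (\<mu> * Re (Ln w)) * cos (\<mu> * Im (Ln w))"
    using assms(1) by (auto simp: powr_def Re_exp)
  ultimately show ?thesis
    by simp
qed

lemma norm_powr_real_ge:
  fixes w :: complex
  assumes "0 \<le> \<beta>" and "\<beta> \<le> cmod w" and "0 \<le> \<mu>"
  shows "\<beta> powr \<mu> \<le> cmod (w powr of_real \<mu>)"
  using assms by (simp add: norm_powr_real_powr' powr_mono2)

lemma norm_le_norm_add_of_real:
  fixes u :: complex
  assumes "Re u \<ge> 0" and "\<alpha> \<ge> 0"
  shows "cmod u \<le> cmod (u + of_real \<alpha>)"
proof -
  have "(cmod (u + of_real \<alpha>))\<^sup>2 = (cmod u)\<^sup>2 + 2 * \<alpha> * Re u + \<alpha>\<^sup>2"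
    unfolding cmod_power2 by (simp add: power2_eq_square algebra_simps)
  with assms have "(cmod u)\<^sup>2 \<le> (cmod (u + of_real \<alpha>))\<^sup>2"
    by simp
  then show ?thesis
    by (simp add: power2_le_iff_abs_le)
qed

lemma divide_add_le_divide_add:
  fixes s t \<alpha> :: real
  assumes "\<alpha> \<le> 0" and "s \<le> t" and "s + \<alpha> > 0"
  shows "t / (t + \<alpha>) \<le> s / (s + \<alpha>)"
proof -
  have "t * (s + \<alpha>) \<le> s * (t + \<alpha>)"
    using assms(1,2) by (simp add: algebra_simps mult_left_mono_neg)
  with assms show ?thesis
    by (simp add: divide_simps)
qed

lemma gfun_norm_le_1:
  assumes "\<alpha> \<ge> 0" and "\<beta> \<ge> 0" and "\<bar>\<mu>\<bar> \<le> 1" and "Re z > 0"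
  shows "cmod (gfun \<alpha> \<beta> \<mu> z) \<le> 1"
proof -
  define u where "u = (z + of_real \<beta>) powr of_real \<mu>"
  have "Re u \<ge> 0"
    unfolding u_def using assms by (intro Re_powr_real_nonneg) auto
  then have "cmod u \<le> cmod (u + of_real \<alpha>)"
    using assms(1) by (rule norm_le_norm_add_of_real)
  then have "cmod (u / (u + of_real \<alpha>)) \<le> 1"
    by (cases "u + of_real \<alpha> = 0") (auto simp: norm_divide divide_le_eq_1)
  then show ?thesis
    by (simp add: gfun_def u_def)
qed

lemma gfun_norm_le_neg:
  assumes "\<alpha> < 0" and "\<alpha> + \<beta> powr \<mu> > 0" and "\<beta> \<ge> 0" and "\<mu> \<ge> 0" and "Re z > 0"
  shows "cmod (gfun \<alpha> \<beta> \<mu> z) \<le> \<beta> powr \<mu> / (\<alpha> + \<beta> powr \<mu>)"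
proof -
  define u where "u = (z + of_real \<beta>) powr of_real \<mu>"
  have "\<beta> \<le> cmod (z + of_real \<beta>)"
    using complex_Re_le_cmod[of "z + of_real \<beta>"] assms(5) by simp
  then have lower: "\<beta> powr \<mu> \<le> cmod u"
    unfolding u_def using assms(3,4) by (intro norm_powr_real_ge)
  have "cmod u - cmod (- of_real \<alpha> :: complex) \<le> cmod (u + of_real \<alpha>)"
    using norm_triangle_ineq2[of u "- of_real \<alpha>"] by simp
  with assms(1) have denom: "cmod u + \<alpha> \<le> cmod (u + of_real \<alpha>)"
    by simp
  have pos: "cmod u + \<alpha> > 0"
    using lower assms(2) by linarith
  have "cmod (u / (u + of_real \<alpha>)) \<le> cmod u / (cmod u + \<alpha>)"
    unfolding norm_divide using denom pos by (intro divide_left_mono) (auto intro!: mult_pos_pos)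
  also have "\<dots> \<le> \<beta> powr \<mu> / (\<beta> powr \<mu> + \<alpha>)"
    using assms(1,2) lower by (intro divide_add_le_divide_add) auto
  finally show ?thesis
    by (simp add: gfun_def u_def add.commute)
qed

theorem lemma3p2:
  fixes \<alpha> \<beta> \<mu> :: real
  assumes "\<beta> \<ge> 0" and "0 < \<mu>" and "\<mu> \<le> 1"
  shows "(\<alpha> \<ge> 0 \<longrightarrow> (\<forall>z. Re z > 0 \<longrightarrow> cmod (gfun \<alpha> \<beta> \<mu> z) \<le> 1))
       \<and> ((\<alpha> < 0 \<and> \<alpha> + \<beta> powr \<mu> \<ge> \<bar>\<alpha>\<bar>) \<longrightarrow>
           (\<forall>z. Re z > 0 \<longrightarrow>
              cmod (gfun \<alpha> \<beta> \<mu> z) \<le> \<beta> powr \<mu> / (\<alpha> + \<beta> powr \<mu>)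
            \<and> \<beta> powr \<mu> / (\<alpha> + \<beta> powr \<mu>) \<le> \<beta> powr \<mu> / \<bar>\<alpha>\<bar>))"
proof (intro conjI impI allI)
  fix z :: complex
  assume "\<alpha> \<ge> 0" and "Re z > 0"
  with assms show "cmod (gfun \<alpha> \<beta> \<mu> z) \<le> 1"
    by (intro gfun_norm_le_1) auto
next
  fix z :: complex
  assume "\<alpha> < 0 \<and> \<alpha> + \<beta> powr \<mu> \<ge> \<bar>\<alpha>\<bar>" and "Re z > 0"
  with assms show "cmod (gfun \<alpha> \<beta> \<mu> z) \<le> \<beta> powr \<mu> / (\<alpha> + \<beta> powr \<mu>)"
    by (intro gfun_norm_le_neg) auto
next
  assume "\<alpha> < 0 \<and> \<alpha> + \<beta> powr \<mu> \<ge> \<bar>\<alpha>\<bar>"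
  then show "\<beta> powr \<mu> / (\<alpha> + \<beta> powr \<mu>) \<le> \<beta> powr \<mu> / \<bar>\<alpha>\<bar>"
    by (intro divide_left_mono) (auto intro!: mult_pos_neg)
qed

end
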